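(* Let $(X,d)$ be a metric space and let $u,u_1,u_2,\ldots\in F_{USC}(X)$. Then: (i) $H_{\rm send}(u_n,u)\to0$ if and only if $H_{\rm end}(u_n,u)\to0$ and $H([u_n]_0,[u]_0)\to0$; (ii) ${\rm send}\,u_n$ Kuratowski converges to ${\rm send}\,u$ if and only if $u_n\stackrel{\Gamma}{\longrightarrow}u$ and $[u_n]_0$ Kuratowski converges to $[u]_0$.
   Context: A fuzzy set on $X$ is a function $u:X\to[0,1]$, with $\alpha$-cuts $[u]_\alpha=\{x: u(x)\ge\alpha\}$ for $\alpha\in(0,1]$ and $[u]_0=\overline{\{u>0\}}$. $F_{USC}(X)$ is the set of fuzzy sets with all $\alpha$-cuts ($\alpha\in[0,1]$) non-empty and closed. $X\times[0,1]$ is metrized by $\overline{d}((x,\alpha),(y,\beta))=d(x,y)+|\alpha-\beta|$. For non-empty closed sets $U,V$ in a metric space, $H(U,V)=\max\{\sup_{a\in U}\inf_{b\in V}\rho(a,b),\sup_{b\in V}\inf_{a\in U}\rho(a,b)\}$ is the Hausdorff distance ($\rho=d$ on $X$, $\rho=\overline{d}$ on $X\times[0,1]$). ${\rm end}\,u=\{(x,t)\in X\times[0,1]: u(x)\ge t\}$, ${\rm send}\,u={\rm end}\,u\cap([u]_0\times[0,1])$, $H_{\rm end}(u,v)=H({\rm end}\,u,{\rm end}\,v)$, $H_{\rm send}(u,v)=H({\rm send}\,u,{\rm send}\,v)$. For sets $C_n$: $\liminf_n C_n=\{x: x=\lim_n x_n, x_n\in C_n\}$, $\limsup_n C_n=\{x: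 x=\lim_j x_{n_j}, x_{n_j}\in C_{n_j}\}$; $C_n$ Kuratowski converges to $C$ if $C=\liminf_n C_n=\limsup_n C_n$. $u_n\stackrel{\Gamma}{\longrightarrow}u$ means ${\rm end}\,u_n$ Kuratowski converges to ${\rm end}\,u$. *)

theory Defs
  imports "HOL-Analysis.Analysis"
begin

definition fuzzy_set :: "('a \<Rightarrow> real) \<Rightarrow> bool" where
  "fuzzy_set u \<longleftrightarrow> (\<forall>x. 0 \<le> u x \<and> u x \<le> 1)"

definition cut :: "('a::topological_space \<Rightarrow> real) \<Rightarrow> real \<Rightarrow> 'a set" where
  "cut u \<alpha> = (if \<alpha> = 0 then closure {x. u x > 0} else {x. u x \<ge> \<alpha>})"

definition F_USC :: "('a::topological_space \<Rightarrow> real) set" where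
  "F_USC = {u. fuzzy_set u \<and> (\<forall>\<alpha>\<in>{0..1}. cut u \<alpha> \<noteq> {} \<and> closed (cut u \<alpha>))}"

definition endo :: "('a \<Rightarrow> real) \<Rightarrow> ('a \<times> real) set" where
  "endo u = {(x, t). t \<in> {0..1} \<and> u x \<ge> t}"

definition sendo :: "('a::topological_space \<Rightarrow> real) \<Rightarrow> ('a \<times> real) set" where
  "sendo u = endo u \<inter> (cut u 0 \<times> {0..1})"

definition hausdorff :: "('b \<Rightarrow> 'b \<Rightarrow> real) \<Rightarrow> 'b set \<Rightarrow> 'b set \<Rightarrow> ereal" where
  "hausdorff \<rho> U V = max (SUP a\<in>U. INF b\<in>V. ereal (\<rho> a b)) (SUP b\<in>V. INF a\<in>U. ereal (\<rho> a b))"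

definition dbar :: "('a::metric_space \<times> real) \<Rightarrow> ('a \<times> real) \<Rightarrow> real" where
  "dbar p q = dist (fst p) (fst q) + \<bar>snd p - snd q\<bar>"

definition H_end :: "('a::metric_space \<Rightarrow> real) \<Rightarrow> ('a \<Rightarrow> real) \<Rightarrow> ereal" where
  "H_end u v = hausdorff dbar (endo u) (endo v)"

definition H_send :: "('a::metric_space \<Rightarrow> real) \<Rightarrow> ('a \<Rightarrow> real) \<Rightarrow> ereal" where
  "H_send u v = hausdorff dbar (sendo u) (sendo v)"

definition kliminf :: "(nat \<Rightarrow> 'b::topological_space set) \<Rightarrow> 'b set" where
  "kliminf C = {x. \<exists>f. (\<forall>n. f n \<in> C n) \<and> f \<longlonglongrightarrow> x}"

definition klimsup :: "(nat \<Rightarrow> 'b::topological_space set) \<Rightarrow> 'b set" where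
  "klimsup C = {x. \<exists>r f. strict_mono r \<and> (\<forall>j. f j \<in> C (r j)) \<and> f \<longlonglongrightarrow> x}"

definition kuratowski_conv :: "(nat \<Rightarrow> 'b::topological_space set) \<Rightarrow> 'b set \<Rightarrow> bool" where
  "kuratowski_conv C A \<longleftrightarrow> A = kliminf C \<and> A = klimsup C"

definition gamma_conv :: "(nat \<Rightarrow> 'a::topological_space \<Rightarrow> real) \<Rightarrow> ('a \<Rightarrow> real) \<Rightarrow> bool" where
  "gamma_conv us u \<longleftrightarrow> kuratowski_conv (\<lambda>n. endo (us n)) (endo u)"

end

theory Submission
  imports Defs
begin

(* The endograph of a nonnegative u is its sendograph together with the base X x {0}, and the
   two coincide above the base; the base of send u is [u]_0 x {0}, so [u]_0 is the projection of
   send u. Hence Hausdorff-close sendographs have close endographs (the base is common to all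
   endographs) and close supports (project to X). Conversely, a point of send u is approximated
   by a point of end u_n; if that point lies on the base, the level of the original point is
   small, and a nearby point of [u_n]_0 x {0} approximates it within twice the distance.
   Kuratowski convergence follows the same pattern with sequences, using that X x (0, oo) is
   open. *)

definition subset_nbhd :: "('b \<Rightarrow> 'b \<Rightarrow> real) \<Rightarrow> real \<Rightarrow> 'b set \<Rightarrow> 'b set \<Rightarrow> bool" where
  "subset_nbhd \<rho> e U V \<longleftrightarrow> (\<forall>a\<in>U. \<exists>b\<in>V. \<rho> a b < e)"

lemma subset_nbhdI: "(\<And>a. a \<in> U \<Longrightarrow> \<exists>b\<in>V. \<rho> a b < e) \<Longrightarrow> subset_nbhd \<rho> e U V"
  unfolding subset_nbhd_def by blast

lemma subset_nbhdE:
  assumes "subset_nbhd \<rho> e U V" "a \<in> U"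
  obtains b where "b \<in> V" "\<rho> a b < e"
  using assms unfolding subset_nbhd_def by blast

lemma hausdorff_symmetric:
  assumes "\<And>a b. \<rho> a b = \<rho> b a"
  shows "hausdorff \<rho> U V = max (SUP a\<in>U. INF b\<in>V. ereal (\<rho> a b)) (SUP b\<in>V. INF a\<in>U. ereal (\<rho> b a))"
  unfolding hausdorff_def using assms by simp

lemma SUP_INF_le_if_subset_nbhd:
  assumes "subset_nbhd \<rho> e U V"
  shows "(SUP a\<in>U. INF b\<in>V. ereal (\<rho> a b)) \<le> ereal e"
proof (rule SUP_least)
  fix a assume "a \<in> U"
  with assms obtain b where "b \<in> V" "\<rho> a b < e" by (rule subset_nbhdE)
  then have "(INF b\<in>V. ereal (\<rho> a b)) \<le> ereal (\<rho> a b)" by (intro INF_lower)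
  also have "\<dots> \<le> ereal e" using \<open>\<rho> a b < e\<close> by simp
  finally show "(INF b\<in>V. ereal (\<rho> a b)) \<le> ereal e" .
qed

lemma subset_nbhd_if_SUP_INF_less:
  assumes "(SUP a\<in>U. INF b\<in>V. ereal (\<rho> a b)) < ereal e"
  shows "subset_nbhd \<rho> e U V"
proof (rule subset_nbhdI)
  fix a assume "a \<in> U"
  then have "(INF b\<in>V. ereal (\<rho> a b)) < ereal e"
    using assms by (meson SUP_upper order.strict_trans1)
  then show "\<exists>b\<in>V. \<rho> a b < e" by (simp add: INF_less_iff)
qed

lemma hausdorff_nonneg:
  assumes "U \<noteq> {}" "\<And>a b. 0 \<le> \<rho> a b"
  shows "0 \<le> hausdorff \<rho> U V"
proof -
  obtain a where "a \<in> U" using assms(1) by blast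
  have "0 \<le> (INF b\<in>V. ereal (\<rho> a b))" by (rule INF_greatest) (simp add: assms(2))
  also have "\<dots> \<le> (SUP a\<in>U. INF b\<in>V. ereal (\<rho> a b))" using \<open>a \<in> U\<close> by (rule SUP_upper)
  also have "\<dots> \<le> hausdorff \<rho> U V" unfolding hausdorff_def by simp
  finally show ?thesis .
qed

lemma hausdorff_tendsto_0_iff:
  assumes "\<And>n. U n \<noteq> {}" "\<And>a b. 0 \<le> \<rho> a b" "\<And>a b. \<rho> a b = \<rho> b a"
  shows "(\<lambda>n. hausdorff \<rho> (U n) (V n)) \<longlonglongrightarrow> 0 \<longleftrightarrow>
    (\<forall>e>0. \<forall>\<^sub>F n in sequentially. subset_nbhd \<rho> e (U n) (V n) \<and> subset_nbhd \<rho> e (V n) (U n))"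
    (is "_ \<longleftrightarrow> (\<forall>e>0. \<forall>\<^sub>F n in sequentially. ?near e n)")
proof
  assume lim: "(\<lambda>n. hausdorff \<rho> (U n) (V n)) \<longlonglongrightarrow> 0"
  show "\<forall>e>0. \<forall>\<^sub>F n in sequentially. ?near e n"
  proof (intro allI impI)
    fix e :: real assume "e > 0"
    then have "\<forall>\<^sub>F n in sequentially. hausdorff \<rho> (U n) (V n) < ereal e"
      using order_tendstoD(2)[OF lim, of "ereal e"] by simp
    then show "\<forall>\<^sub>F n in sequentially. ?near e n"
      by eventually_elim (simp add: hausdorff_symmetric[OF assms(3)] subset_nbhd_if_SUP_INF_less)
  qed
next
  assume near: "\<forall>e>0. \<forall>\<^sub>F n in sequentially. ?near e n"
  show "(\<lambda>n. hausdorff \<rho> (U n) (V n)) \<longlonglongrightarrow> 0"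
  proof (rule order_tendstoI)
    fix a :: ereal assume "a < 0"
    then show "\<forall>\<^sub>F n in sequentially. a < hausdorff \<rho> (U n) (V n)"
      using hausdorff_nonneg[OF assms(1,2)] by (simp add: order.strict_trans2)
  next
    fix a :: ereal assume "0 < a"
    then obtain e where "0 < ereal e" "ereal e < a" using ereal_dense2 by blast
    then have "\<forall>\<^sub>F n in sequentially. ?near e n" using near by simp
    then show "\<forall>\<^sub>F n in sequentially. hausdorff \<rho> (U n) (V n) < a"
    proof eventually_elim
      case (elim n)
      then have "hausdorff \<rho> (U n) (V n) \<le> ereal e"
        by (simp add: hausdorff_symmetric[OF assms(3)] SUP_INF_le_if_subset_nbhd)
      then show ?case using \<open>ereal e < a\<close> by simp
    qed
  qed
qed

lemma kliminfI: "(\<And>n. f n \<in> C n) \<Longrightarrow> f \<longlonglongrightarrow> x \<Longrightarrow> x \<in> kliminf C"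
  unfolding kliminf_def by blast

lemma kliminfE:
  assumes "x \<in> kliminf C"
  obtains f where "\<forall>n. f n \<in> C n" "f \<longlonglongrightarrow> x"
  using assms unfolding kliminf_def by blast

lemma klimsupI: "strict_mono r \<Longrightarrow> (\<And>j. f j \<in> C (r j)) \<Longrightarrow> f \<longlonglongrightarrow> x \<Longrightarrow> x \<in> klimsup C"
  unfolding klimsup_def by blast

lemma klimsupE:
  assumes "x \<in> klimsup C"
  obtains r f where "strict_mono r" "\<forall>j. f j \<in> C (r j)" "f \<longlonglongrightarrow> x"
  using assms unfolding klimsup_def by blast

lemma kliminf_subset_klimsup: "kliminf C \<subseteq> klimsup C"
  unfolding kliminf_def klimsup_def using strict_mono_id by fastforce

lemma kuratowski_conv_iff: "kuratowski_conv C A \<longleftrightarrow> A \<subseteq> kliminf C \<and> klimsup C \<subseteq> A"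
  unfolding kuratowski_conv_def using kliminf_subset_klimsup[of C] by blast

lemma kliminf_mono: "(\<And>n. C n \<subseteq> D n) \<Longrightarrow> kliminf C \<subseteq> kliminf D"
  unfolding kliminf_def by blast

lemma klimsup_mono: "(\<And>n. C n \<subseteq> D n) \<Longrightarrow> klimsup C \<subseteq> klimsup D"
  unfolding klimsup_def by blast

lemma subset_kliminf: "(\<And>n. A \<subseteq> C n) \<Longrightarrow> A \<subseteq> kliminf C"
  using kliminfI[of "\<lambda>_. _" C] by blast

lemma klimsup_subset_closed:
  assumes "closed F" "\<And>n. C n \<subseteq> F"
  shows "klimsup C \<subseteq> F"
proof
  fix x assume "x \<in> klimsup C"
  then obtain r f where "strict_mono r" "\<forall>j. f j \<in> C (r j)" "f \<longlonglongrightarrow> x" by (rule klimsupE)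
  with assms show "x \<in> F" by (meson closed_sequentially subsetD)
qed

lemma image_kliminf_subset:
  assumes "continuous_on UNIV g"
  shows "g ` kliminf C \<subseteq> kliminf (\<lambda>n. g ` C n)"
proof
  fix y assume "y \<in> g ` kliminf C"
  then obtain x where "y = g x" "x \<in> kliminf C" by blast
  from \<open>x \<in> kliminf C\<close> obtain f where "\<forall>n. f n \<in> C n" "f \<longlonglongrightarrow> x" by (rule kliminfE)
  moreover have "(\<lambda>n. g (f n)) \<longlonglongrightarrow> g x"
    using assms \<open>f \<longlonglongrightarrow> x\<close> by (rule continuous_on_tendsto_compose) simp_all
  ultimately show "y \<in> kliminf (\<lambda>n. g ` C n)"
    unfolding \<open>y = g x\<close> by (intro kliminfI[of "\<lambda>n. g (f n)"]) auto
qed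

lemma image_klimsup_subset:
  assumes "continuous_on UNIV g"
  shows "g ` klimsup C \<subseteq> klimsup (\<lambda>n. g ` C n)"
proof
  fix y assume "y \<in> g ` klimsup C"
  then obtain x where "y = g x" "x \<in> klimsup C" by blast
  from \<open>x \<in> klimsup C\<close> obtain r f where "strict_mono r" "\<forall>j. f j \<in> C (r j)" "f \<longlonglongrightarrow> x"
    by (rule klimsupE)
  moreover have "(\<lambda>j. g (f j)) \<longlonglongrightarrow> g x"
    using assms \<open>f \<longlonglongrightarrow> x\<close> by (rule continuous_on_tendsto_compose) simp_all
  ultimately show "y \<in> klimsup (\<lambda>n. g ` C n)"
    unfolding \<open>y = g x\<close> by (intro klimsupI[of r "\<lambda>j. g (f j)"]) auto
qed

lemma kliminf_Int_open_subset:
  assumes "open S" "\<And>n. C n \<inter> S \<subseteq> D n" "\<And>n. D n \<noteq> {}"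
  shows "kliminf C \<inter> S \<subseteq> kliminf D"
proof
  fix x assume x: "x \<in> kliminf C \<inter> S"
  from IntD1[OF x] obtain f where f: "\<forall>n. f n \<in> C n" "f \<longlonglongrightarrow> x" by (rule kliminfE)
  have "\<forall>\<^sub>F n in sequentially. f n \<in> S"
    using topological_tendstoD[OF f(2) assms(1) IntD2[OF x]] .
  then have in_D: "\<forall>\<^sub>F n in sequentially. f n \<in> D n"
    by (rule eventually_mono) (use f(1) assms(2) in blast)
  define g where "g n = (if f n \<in> D n then f n else (SOME y. y \<in> D n))" for n
  have "g n \<in> D n" for n
    using someI_ex[of "\<lambda>y. y \<in> D n"] assms(3)[of n] unfolding g_def by auto
  moreover have "g \<longlonglongrightarrow> x"
  proof (rule Lim_transform_eventually[OF f(2)])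
    from in_D show "\<forall>\<^sub>F n in sequentially. f n = g n"
      by eventually_elim (simp add: g_def)
  qed
  ultimately show "x \<in> kliminf D" by (rule kliminfI)
qed

lemma klimsup_Int_open_subset:
  assumes "open S" "\<And>n. C n \<inter> S \<subseteq> D n"
  shows "klimsup C \<inter> S \<subseteq> klimsup D"
proof
  fix x assume x: "x \<in> klimsup C \<inter> S"
  from IntD1[OF x] obtain r f where r: "strict_mono r" and f: "\<forall>j. f j \<in> C (r j)" "f \<longlonglongrightarrow> x"
    by (rule klimsupE)
  have "\<forall>\<^sub>F j in sequentially. f j \<in> S"
    using topological_tendstoD[OF f(2) assms(1) IntD2[OF x]] .
  then obtain N where N: "\<And>j. j \<ge> N \<Longrightarrow> f j \<in> S"
    unfolding eventually_sequentially by blast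
  have "strict_mono (\<lambda>j. r (j + N))" using r by (simp add: strict_mono_def)
  moreover have "f (j + N) \<in> D (r (j + N))" for j
    using f(1) N[of "j + N"] assms(2)[of "r (j + N)"] by auto
  moreover have "(\<lambda>j. f (j + N)) \<longlonglongrightarrow> x" using f(2) by (rule LIMSEQ_ignore_initial_segment)
  ultimately show "x \<in> klimsup D" by (rule klimsupI)
qed

lemma mem_endo_iff: "(x, t) \<in> endo u \<longleftrightarrow> 0 \<le> t \<and> t \<le> 1 \<and> t \<le> u x"
  unfolding endo_def by auto

lemma mem_sendo_iff: "p \<in> sendo u \<longleftrightarrow> p \<in> endo u \<and> fst p \<in> cut u 0"
  unfolding sendo_def endo_def by auto

lemma sendo_subset_endo: "sendo u \<subseteq> endo u"
  unfolding sendo_def by blast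

lemma endo_subset: "endo u \<subseteq> UNIV \<times> {0..1}"
  unfolding endo_def by auto

lemma Pair_0_mem_endo: "0 \<le> u x \<Longrightarrow> (x, 0) \<in> endo u"
  by (simp add: mem_endo_iff)

lemma Pair_0_mem_sendo_iff: "0 \<le> u x \<Longrightarrow> (x, 0) \<in> sendo u \<longleftrightarrow> x \<in> cut u 0"
  by (simp add: mem_sendo_iff Pair_0_mem_endo)

lemma mem_sendo_if_snd_pos:
  assumes "p \<in> endo u" "0 < snd p"
  shows "p \<in> sendo u"
proof -
  have "0 < u (fst p)" using assms by (cases p) (auto simp: mem_endo_iff)
  then have "fst p \<in> cut u 0" using closure_subset by (force simp: cut_def)
  with assms(1) show ?thesis by (simp add: mem_sendo_iff)
qed

lemma snd_eq_0_if_mem_endo_not_sendo: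
  assumes "p \<in> endo u" "p \<notin> sendo u"
  shows "snd p = 0"
  using assms mem_sendo_if_snd_pos[of p u] endo_subset[of u] by force

lemma fst_sendo:
  assumes "\<And>x. 0 \<le> u x"
  shows "fst ` sendo u = cut u 0"
proof
  show "fst ` sendo u \<subseteq> cut u 0" by (auto simp: mem_sendo_iff)
  show "cut u 0 \<subseteq> fst ` sendo u"
    using Pair_0_mem_sendo_iff[of u, OF assms] by (metis fst_conv image_eqI subsetI)
qed

lemma sendo_ne: "(\<And>x. 0 \<le> u x) \<Longrightarrow> cut u 0 \<noteq> {} \<Longrightarrow> sendo u \<noteq> {}"
  using fst_sendo[of u] by auto

lemma endo_subset_sendo_Un_base: "endo u \<subseteq> sendo u \<union> UNIV \<times> {0}"
  using snd_eq_0_if_mem_endo_not_sendo[of _ u] by (auto simp: mem_Times_iff)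

lemma base_subset_endo: "(\<And>x. 0 \<le> u x) \<Longrightarrow> UNIV \<times> {0} \<subseteq> endo u"
  by (auto simp: mem_endo_iff)

lemma endo_Int_above_base_subset_sendo: "endo u \<inter> UNIV \<times> {0<..} \<subseteq> sendo u"
  using mem_sendo_if_snd_pos[of _ u] by auto

lemma open_above_base: "open (UNIV \<times> {0::real<..})"
  by (intro open_Times open_UNIV open_greaterThan)

lemma Pair_0_image_cut_subset_sendo: "(\<And>x. 0 \<le> u x) \<Longrightarrow> (\<lambda>x. (x, 0)) ` cut u 0 \<subseteq> sendo u"
  using Pair_0_mem_sendo_iff[of u] by auto

lemma dbar_nonneg: "0 \<le> dbar p q"
  unfolding dbar_def by simp

lemma dbar_commute: "dbar p q = dbar q p"
  unfolding dbar_def by (simp add: dist_commute abs_minus_commute)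

lemma subset_nbhd_endo_if_sendo:
  assumes "\<And>x. 0 \<le> v x" "0 < e" "subset_nbhd dbar e (sendo u) (sendo v)"
  shows "subset_nbhd dbar e (endo u) (endo v)"
proof (rule subset_nbhdI)
  fix p assume p: "p \<in> endo u"
  show "\<exists>q\<in>endo v. dbar p q < e"
  proof (cases "p \<in> sendo u")
    case True
    with assms(3) obtain q where "q \<in> sendo v" "dbar p q < e" by (rule subset_nbhdE)
    then show ?thesis using sendo_subset_endo by blast
  next
    case False
    with p have "snd p = 0" by (rule snd_eq_0_if_mem_endo_not_sendo)
    then have "dbar p (fst p, 0) < e" using assms(2) by (simp add: dbar_def)
    then show ?thesis using Pair_0_mem_endo[of v, OF assms(1)] by blast
  qed
qed

lemma subset_nbhd_cut_if_sendo:
  assumes "\<And>x. 0 \<le> u x" "subset_nbhd dbar e (sendo u) (sendo v)"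
  shows "subset_nbhd dist e (cut u 0) (cut v 0)"
proof (rule subset_nbhdI)
  fix x assume "x \<in> cut u 0"
  then have "(x, 0) \<in> sendo u" using Pair_0_mem_sendo_iff[of u, OF assms(1)] by blast
  with assms(2) obtain q where q: "q \<in> sendo v" "dbar (x, 0) q < e" by (rule subset_nbhdE)
  then have "fst q \<in> cut v 0" by (simp add: mem_sendo_iff)
  moreover have "dist x (fst q) < e"
    using q(2) abs_ge_zero[of "snd q"] by (simp add: dbar_def)
  ultimately show "\<exists>y\<in>cut v 0. dist x y < e" by blast
qed

lemma subset_nbhd_sendo_if_endo_cut:
  assumes "\<And>x. 0 \<le> v x"
    and endo_near: "subset_nbhd dbar e (endo u) (endo v)"
    and cut_near: "subset_nbhd dist e (cut u 0) (cut v 0)"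
  shows "subset_nbhd dbar (2 * e) (sendo u) (sendo v)"
proof (rule subset_nbhdI)
  fix p assume "p \<in> sendo u"
  then have p: "p \<in> endo u" "fst p \<in> cut u 0" by (simp_all add: mem_sendo_iff)
  from endo_near p(1) obtain q where q: "q \<in> endo v" "dbar p q < e" by (rule subset_nbhdE)
  from cut_near p(2) obtain y where y: "y \<in> cut v 0" "dist (fst p) y < e" by (rule subset_nbhdE)
  show "\<exists>q\<in>sendo v. dbar p q < 2 * e"
  proof (cases "q \<in> sendo v")
    case True
    then show ?thesis using q(2) dbar_nonneg[of p q] by (intro bexI[of _ q]) simp_all
  next
    case False
    \<comment> \<open>Then q lies on the base X \<times> {0}, so it only shows that the level of p is below e;
      the support point (y, 0) is the witness.\<close>
    with q(1) have "snd q = 0" by (rule snd_eq_0_if_mem_endo_not_sendo)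
    then have "\<bar>snd p\<bar> < e" using q(2) zero_le_dist[of "fst p" "fst q"] unfolding dbar_def by linarith
    then have "dbar p (y, 0) < 2 * e" using y(2) by (simp add: dbar_def)
    moreover have "(y, 0) \<in> sendo v" using y(1) Pair_0_mem_sendo_iff[of v, OF assms(1)] by blast
    ultimately show ?thesis by blast
  qed
qed

lemma H_send_tendsto_0_iff:
  fixes u :: "'a::metric_space \<Rightarrow> real" and us :: "nat \<Rightarrow> 'a \<Rightarrow> real"
  assumes u_nonneg: "\<And>x. 0 \<le> u x" and us_nonneg: "\<And>n x. 0 \<le> us n x"
    and support_ne: "\<And>n. cut (us n) 0 \<noteq> {}"
  shows "(\<lambda>n. H_send (us n) u) \<longlonglongrightarrow> 0 \<longleftrightarrow>
    (\<lambda>n. H_end (us n) u) \<longlonglongrightarrow> 0 \<and> (\<lambda>n. hausdorff dist (cut (us n) 0) (cut u 0)) \<longlonglongrightarrow> 0"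
proof -
  have sendo_us_ne: "sendo (us n) \<noteq> {}" for n
    using sendo_ne[of "us n"] us_nonneg support_ne by blast
  then have endo_us_ne: "endo (us n) \<noteq> {}" for n
    using sendo_subset_endo by blast
  note H_send_iff = hausdorff_tendsto_0_iff[where U = "\<lambda>n. sendo (us n)" and V = "\<lambda>_. sendo u" and \<rho> = dbar,
    OF sendo_us_ne dbar_nonneg dbar_commute, folded H_send_def]
  note H_end_iff = hausdorff_tendsto_0_iff[where U = "\<lambda>n. endo (us n)" and V = "\<lambda>_. endo u" and \<rho> = dbar,
    OF endo_us_ne dbar_nonneg dbar_commute, folded H_end_def]
  note H_cut_iff = hausdorff_tendsto_0_iff[where U = "\<lambda>n. cut (us n) 0" and V = "\<lambda>_. cut u 0",
    OF support_ne zero_le_dist dist_commute]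
  show ?thesis
    unfolding H_send_iff H_end_iff H_cut_iff
  proof (intro iffI conjI allI impI)
    fix e :: real
    assume "0 < e" and "\<forall>e>0. \<forall>\<^sub>F n in sequentially.
      subset_nbhd dbar e (sendo (us n)) (sendo u) \<and> subset_nbhd dbar e (sendo u) (sendo (us n))"
    then have near: "\<forall>\<^sub>F n in sequentially.
      subset_nbhd dbar e (sendo (us n)) (sendo u) \<and> subset_nbhd dbar e (sendo u) (sendo (us n))"
      by blast
    from near show "\<forall>\<^sub>F n in sequentially.
      subset_nbhd dbar e (endo (us n)) (endo u) \<and> subset_nbhd dbar e (endo u) (endo (us n))"
      by eventually_elim (simp add: \<open>0 < e\<close> u_nonneg us_nonneg subset_nbhd_endo_if_sendo)
    from near show "\<forall>\<^sub>F n in sequentially.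
      subset_nbhd dist e (cut (us n) 0) (cut u 0) \<and> subset_nbhd dist e (cut u 0) (cut (us n) 0)"
      by eventually_elim (simp add: u_nonneg us_nonneg subset_nbhd_cut_if_sendo)
  next
    fix e :: real
    assume "0 < e" and "(\<forall>e>0. \<forall>\<^sub>F n in sequentially.
        subset_nbhd dbar e (endo (us n)) (endo u) \<and> subset_nbhd dbar e (endo u) (endo (us n))) \<and>
      (\<forall>e>0. \<forall>\<^sub>F n in sequentially.
        subset_nbhd dist e (cut (us n) 0) (cut u 0) \<and> subset_nbhd dist e (cut u 0) (cut (us n) 0))"
    then have "\<forall>\<^sub>F n in sequentially.
        subset_nbhd dbar (e/2) (endo (us n)) (endo u) \<and> subset_nbhd dbar (e/2) (endo u) (endo (us n))"
      "\<forall>\<^sub>F n in sequentially.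
        subset_nbhd dist (e/2) (cut (us n) 0) (cut u 0) \<and> subset_nbhd dist (e/2) (cut u 0) (cut (us n) 0)"
      by simp_all
    then show "\<forall>\<^sub>F n in sequentially.
      subset_nbhd dbar e (sendo (us n)) (sendo u) \<and> subset_nbhd dbar e (sendo u) (sendo (us n))"
      by eventually_elim
        (metis subset_nbhd_sendo_if_endo_cut u_nonneg us_nonneg field_sum_of_halves mult_2)
  qed
qed

lemma gamma_conv_if_kuratowski_conv_sendo:
  assumes u_nonneg: "\<And>x. 0 \<le> u x" and us_nonneg: "\<And>n x. 0 \<le> us n x"
    and "kuratowski_conv (\<lambda>n. sendo (us n)) (sendo u)"
  shows "gamma_conv us u"
proof -
  from assms(3) have lower: "sendo u \<subseteq> kliminf (\<lambda>n. sendo (us n))"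
    and upper: "klimsup (\<lambda>n. sendo (us n)) \<subseteq> sendo u"
    by (simp_all add: kuratowski_conv_iff)
  have "sendo u \<subseteq> kliminf (\<lambda>n. endo (us n))"
    using lower kliminf_mono[of "\<lambda>n. sendo (us n)", OF sendo_subset_endo] by blast
  moreover have "UNIV \<times> {0} \<subseteq> kliminf (\<lambda>n. endo (us n))"
    by (rule subset_kliminf) (rule base_subset_endo[OF us_nonneg])
  ultimately have "endo u \<subseteq> kliminf (\<lambda>n. endo (us n))"
    using endo_subset_sendo_Un_base by blast
  moreover have "klimsup (\<lambda>n. endo (us n)) \<subseteq> endo u"
  proof
    fix p assume p: "p \<in> klimsup (\<lambda>n. endo (us n))"
    show "p \<in> endo u"
    proof (cases "0 < snd p")
      case True
      with p have "p \<in> klimsup (\<lambda>n. endo (us n)) \<inter> UNIV \<times> {0<..}"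
        by (simp add: mem_Times_iff)
      then have "p \<in> klimsup (\<lambda>n. sendo (us n))"
        using klimsup_Int_open_subset[OF open_above_base endo_Int_above_base_subset_sendo] by blast
      then show ?thesis using upper sendo_subset_endo by blast
    next
      case False
      have "klimsup (\<lambda>n. endo (us n)) \<subseteq> UNIV \<times> {0..1}"
        by (intro klimsup_subset_closed closed_Times closed_UNIV closed_atLeastAtMost endo_subset)
      with p False have "p = (fst p, 0)" by (cases p) auto
      then show ?thesis using Pair_0_mem_endo[of u, OF u_nonneg] by metis
    qed
  qed
  ultimately show ?thesis by (simp add: gamma_conv_def kuratowski_conv_iff)
qed

lemma kuratowski_conv_cut_if_kuratowski_conv_sendo:
  assumes u_nonneg: "\<And>x. 0 \<le> u x" and us_nonneg: "\<And>n x. 0 \<le> us n x"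
    and "kuratowski_conv (\<lambda>n. sendo (us n)) (sendo u)"
  shows "kuratowski_conv (\<lambda>n. cut (us n) 0) (cut u 0)"
proof -
  from assms(3) have lower: "sendo u \<subseteq> kliminf (\<lambda>n. sendo (us n))"
    and upper: "klimsup (\<lambda>n. sendo (us n)) \<subseteq> sendo u"
    by (simp_all add: kuratowski_conv_iff)
  have "cut u 0 = fst ` sendo u" by (simp add: fst_sendo u_nonneg)
  also have "\<dots> \<subseteq> fst ` kliminf (\<lambda>n. sendo (us n))" using lower by (rule image_mono)
  also have "\<dots> \<subseteq> kliminf (\<lambda>n. fst ` sendo (us n))"
    by (rule image_kliminf_subset) (intro continuous_intros)
  also have "\<dots> = kliminf (\<lambda>n. cut (us n) 0)" by (simp add: fst_sendo us_nonneg)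
  finally have "cut u 0 \<subseteq> kliminf (\<lambda>n. cut (us n) 0)" .
  moreover have "klimsup (\<lambda>n. cut (us n) 0) \<subseteq> cut u 0"
  proof -
    have "(\<lambda>x. (x, 0)) ` klimsup (\<lambda>n. cut (us n) 0) \<subseteq> klimsup (\<lambda>n. (\<lambda>x. (x, 0::real)) ` cut (us n) 0)"
      by (rule image_klimsup_subset) (intro continuous_intros)
    also have "\<dots> \<subseteq> klimsup (\<lambda>n. sendo (us n))"
      by (rule klimsup_mono) (rule Pair_0_image_cut_subset_sendo[OF us_nonneg])
    also have "\<dots> \<subseteq> sendo u" by (rule upper)
    finally show ?thesis using Pair_0_mem_sendo_iff[of u, OF u_nonneg] by blast
  qed
  ultimately show ?thesis by (simp add: kuratowski_conv_iff)
qed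

lemma kuratowski_conv_sendo_if_gamma_conv_cut:
  assumes u_nonneg: "\<And>x. 0 \<le> u x" and us_nonneg: "\<And>n x. 0 \<le> us n x"
    and support_ne: "\<And>n. cut (us n) 0 \<noteq> {}"
    and "gamma_conv us u" and "kuratowski_conv (\<lambda>n. cut (us n) 0) (cut u 0)"
  shows "kuratowski_conv (\<lambda>n. sendo (us n)) (sendo u)"
proof -
  from assms(4,5) have endo_lower: "endo u \<subseteq> kliminf (\<lambda>n. endo (us n))"
    and endo_upper: "klimsup (\<lambda>n. endo (us n)) \<subseteq> endo u"
    and cut_lower: "cut u 0 \<subseteq> kliminf (\<lambda>n. cut (us n) 0)"
    and cut_upper: "klimsup (\<lambda>n. cut (us n) 0) \<subseteq> cut u 0"
    by (simp_all add: gamma_conv_def kuratowski_conv_iff)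
  have "sendo u \<subseteq> kliminf (\<lambda>n. sendo (us n))"
  proof
    fix p assume p: "p \<in> sendo u"
    show "p \<in> kliminf (\<lambda>n. sendo (us n))"
    proof (cases "0 < snd p")
      case True
      with p endo_lower sendo_subset_endo have "p \<in> kliminf (\<lambda>n. endo (us n)) \<inter> UNIV \<times> {0<..}"
        by (auto simp: mem_Times_iff)
      then show ?thesis
        using kliminf_Int_open_subset[where D = "\<lambda>n. sendo (us n)",
            OF open_above_base endo_Int_above_base_subset_sendo sendo_ne[OF us_nonneg support_ne]]
        by blast
    next
      case False
      with p have "p = (fst p, 0)" "fst p \<in> cut u 0"
        using sendo_subset_endo endo_subset by (fastforce simp: mem_sendo_iff)+
      with cut_lower have "p \<in> (\<lambda>x. (x, 0)) ` kliminf (\<lambda>n. cut (us n) 0)" by blast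
      also have "\<dots> \<subseteq> kliminf (\<lambda>n. (\<lambda>x. (x, 0::real)) ` cut (us n) 0)"
        by (rule image_kliminf_subset) (intro continuous_intros)
      also have "\<dots> \<subseteq> kliminf (\<lambda>n. sendo (us n))"
        by (rule kliminf_mono) (rule Pair_0_image_cut_subset_sendo[OF us_nonneg])
      finally show ?thesis .
    qed
  qed
  moreover have "klimsup (\<lambda>n. sendo (us n)) \<subseteq> sendo u"
  proof
    fix p assume p: "p \<in> klimsup (\<lambda>n. sendo (us n))"
    then have "p \<in> endo u"
      using klimsup_mono[of "\<lambda>n. sendo (us n)", OF sendo_subset_endo] endo_upper by blast
    have "fst p \<in> fst ` klimsup (\<lambda>n. sendo (us n))" using p by blast
    also have "\<dots> \<subseteq> klimsup (\<lambda>n. fst ` sendo (us n))"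
      by (rule image_klimsup_subset) (intro continuous_intros)
    also have "\<dots> \<subseteq> cut u 0" using cut_upper by (simp add: fst_sendo us_nonneg)
    finally show "p \<in> sendo u" using \<open>p \<in> endo u\<close> by (simp add: mem_sendo_iff)
  qed
  ultimately show ?thesis by (simp add: kuratowski_conv_iff)
qed

lemma F_USC_nonneg: "u \<in> F_USC \<Longrightarrow> 0 \<le> u x"
  by (simp add: F_USC_def fuzzy_set_def)

lemma F_USC_cut_0_ne: "u \<in> F_USC \<Longrightarrow> cut u 0 \<noteq> {}"
  by (simp add: F_USC_def)

theorem proposition4p2:
  fixes u :: "'a::metric_space \<Rightarrow> real" and us :: "nat \<Rightarrow> 'a \<Rightarrow> real"
  assumes "u \<in> F_USC" and "\<And>n. us n \<in> F_USC"
  shows "((\<lambda>n. H_send (us n) u) \<longlonglongrightarrow> 0 \<longleftrightarrow>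
           (\<lambda>n. H_end (us n) u) \<longlonglongrightarrow> 0 \<and>
           (\<lambda>n. hausdorff dist (cut (us n) 0) (cut u 0)) \<longlonglongrightarrow> 0)
       \<and> (kuratowski_conv (\<lambda>n. sendo (us n)) (sendo u) \<longleftrightarrow>
           gamma_conv us u \<and> kuratowski_conv (\<lambda>n. cut (us n) 0) (cut u 0))"
proof -
  have u_nonneg: "0 \<le> u x" for x using assms(1) by (rule F_USC_nonneg)
  have us_nonneg: "0 \<le> us n x" for n x using assms(2) by (rule F_USC_nonneg)
  have support_ne: "cut (us n) 0 \<noteq> {}" for n using assms(2) by (rule F_USC_cut_0_ne)
  show ?thesis
    using H_send_tendsto_0_iff[where u = u and us = us, OF u_nonneg us_nonneg support_ne]
      gamma_conv_if_kuratowski_conv_sendo[where u = u and us = us, OF u_nonneg us_nonneg]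
      kuratowski_conv_cut_if_kuratowski_conv_sendo[where u = u and us = us, OF u_nonneg us_nonneg]
      kuratowski_conv_sendo_if_gamma_conv_cut[where u = u and us = us, OF u_nonneg us_nonneg support_ne]
    by blast
qed

end
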